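(* Let $\mathfrak{g}$ be a $6$-dimensional real nilpotent Lie algebra with a complex structure $J$. Then $\mathfrak{g}^*$ has a basis $\{e^1,\dots,e^6\}$ such that $e^1+ie^2$ is a closed $(1,0)$-form (i.e. $d(e^1+ie^2)=0$ and $e^1+ie^2\in\Lambda^{1,0}$) and $de^3\in\langle e^{12}\rangle$, $de^4\in\langle e^{12},e^{13},e^{23}\rangle$, $de^5\in\langle e^{12},e^{13},e^{14},e^{23},e^{24},e^{34}\rangle$, $de^6\in\langle e^{12},e^{13},e^{14},e^{15},e^{23},e^{24},e^{25},e^{34}\rangle$.
   Context: A complex structure is a linear $J\colon\mathfrak{g}\to\mathfrak{g}$ with $J^2=-1$ and $[JX,JY]=[X,Y]+J[JX,Y]+J[X,JY]$ for all $X,Y$. $d\alpha(X,Y)=-\alpha([X,Y])$, extended complex-linearly; $\Lambda^{1,0}$ is the space of complex-linear forms $\omega$ on $\mathfrak{g}$ with $\omega(JX)=i\,\omega(X)$. $e^{ij}=e^i\wedge e^j$. *)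

theory Defs
  imports "HOL-Analysis.Analysis"
begin

definition lie_algebra :: "('g::real_vector \<Rightarrow> 'g \<Rightarrow> 'g) \<Rightarrow> bool" where
  "lie_algebra br \<longleftrightarrow> bilinear br \<and> (\<forall>x. br x x = 0) \<and>
     (\<forall>x y z. br x (br y z) + br y (br z x) + br z (br x y) = 0)"

fun lower_central :: "('g::real_vector \<Rightarrow> 'g \<Rightarrow> 'g) \<Rightarrow> nat \<Rightarrow> 'g set" where
  "lower_central br 0 = UNIV"
| "lower_central br (Suc k) = span {br x y | x y. y \<in> lower_central br k}"

definition nilpotent_lie :: "('g::real_vector \<Rightarrow> 'g \<Rightarrow> 'g) \<Rightarrow> bool" where
  "nilpotent_lie br \<longleftrightarrow> (\<exists>k. lower_central br k = {0})"

definition complex_structure ::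
  "('g::real_vector \<Rightarrow> 'g \<Rightarrow> 'g) \<Rightarrow> ('g \<Rightarrow> 'g) \<Rightarrow> bool" where
  "complex_structure br J \<longleftrightarrow> linear J \<and> (\<forall>x. J (J x) = - x) \<and>
     (\<forall>X Y. br (J X) (J Y) = br X Y + J (br (J X) Y) + J (br X (J Y)))"

definition dform :: "('g \<Rightarrow> 'g \<Rightarrow> 'g) \<Rightarrow> ('g \<Rightarrow> 'a::ab_group_add) \<Rightarrow> 'g \<Rightarrow> 'g \<Rightarrow> 'a" where
  "dform br \<alpha> X Y = - \<alpha> (br X Y)"

definition wedge :: "('g \<Rightarrow> real) \<Rightarrow> ('g \<Rightarrow> real) \<Rightarrow> 'g \<Rightarrow> 'g \<Rightarrow> real" where
  "wedge a b X Y = a X * b Y - b X * a Y"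

definition in_span2 :: "(nat \<Rightarrow> 'g \<Rightarrow> real) \<Rightarrow> (nat \<times> nat) set \<Rightarrow> ('g \<Rightarrow> 'g \<Rightarrow> real) \<Rightarrow> bool" where
  "in_span2 e S \<phi> \<longleftrightarrow> (\<exists>c :: nat \<times> nat \<Rightarrow> real.
     \<forall>X Y. \<phi> X Y = (\<Sum>(i,j)\<in>S. c (i,j) * wedge (e i) (e j) X Y))"

definition dual_basis6 :: "(nat \<Rightarrow> 'g::real_vector \<Rightarrow> real) \<Rightarrow> bool" where
  "dual_basis6 e \<longleftrightarrow> (\<forall>i\<in>{1..6}. linear (e i)) \<and>
     (\<forall>c :: nat \<Rightarrow> real. (\<forall>X. (\<Sum>i=1..6. c i * e i X) = 0) \<longrightarrow> (\<forall>i\<in>{1..6}. c i = 0))"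

definition is_form_10 :: "('g \<Rightarrow> 'g) \<Rightarrow> ('g \<Rightarrow> complex) \<Rightarrow> bool" where
  "is_form_10 J \<omega> \<longleftrightarrow> (\<forall>X. \<omega> (J X) = \<i> * \<omega> X)"

end

theory Submission
  imports Defs
begin

(* Because g is nilpotent and J is integrable, for every nonzero J-invariant subalgebra U the
   J-hull span ([U,U] + J [U,U]) is a proper subspace of U: otherwise U would lie in the J-hull of
   every term of the lower central series of U, which eventually vanishes.  Applied to g this yields a 4-dimensional J-invariant ideal U containing [g,g]; applied to U, together with
   Engel's lemma, it yields t <> 0 with t and J t central in U.  Engel's lemma then gives a basis
   X3, X4, X5, X6 of U adapted to the action of g, with X5, X6 central in U.  Adding X1 outside U and
   X2 = J X1 gives a basis of g, and its dual basis works because d e^k (X a, X b) = - e^k [X a, X b]. *)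

section \<open>Linear complex structures\<close>

lemma span_pairE:
  assumes "x \<in> span {a, b}"
  obtains s t where "x = s *\<^sub>R a + t *\<^sub>R b"
proof -
  obtain s where "x - s *\<^sub>R a \<in> span {b}"
    using assms by (auto simp: span_insert)
  then obtain t where "x - s *\<^sub>R a = t *\<^sub>R b"
    by (auto simp: span_singleton)
  then show ?thesis
    using that[of s t] by (metis add.commute diff_eq_eq)
qed

locale linear_complex_structure =
  fixes J :: "'a::euclidean_space \<Rightarrow> 'a"
  assumes linear_J: "linear J" and J_J [simp]: "J (J x) = - x"
begin

lemmas J_simps [simp] =
  linear_add[OF linear_J] linear_diff[OF linear_J] linear_neg[OF linear_J]
  linear_scale[OF linear_J] linear_0[OF linear_J]

definition J_invariant :: "'a set \<Rightarrow> bool" where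
  "J_invariant W \<longleftrightarrow> J ` W \<subseteq> W"

definition J_hull :: "'a set \<Rightarrow> 'a set" where
  "J_hull S = span (S \<union> J ` S)"

lemma J_invariantD: "J_invariant W \<Longrightarrow> x \<in> W \<Longrightarrow> J x \<in> W"
  unfolding J_invariant_def by blast

lemma J_invariant_UNIV: "J_invariant UNIV"
  by (simp add: J_invariant_def)

lemma J_invariant_zero: "J_invariant {0}"
  by (simp add: J_invariant_def)

lemma J_invariant_span:
  assumes "J ` S \<subseteq> span S"
  shows "J_invariant (span S)"
  unfolding J_invariant_def span_linear_image[OF linear_J, symmetric]
  by (rule span_minimal[OF assms subspace_span])

lemma subspace_J_hull: "subspace (J_hull S)"
  by (simp add: J_hull_def)

lemma J_invariant_J_hull: "J_invariant (J_hull S)"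
proof -
  have "- x \<in> span (S \<union> J ` S)" if "x \<in> S" for x
    using that by (simp add: span_base span_neg)
  then show ?thesis
    unfolding J_hull_def by (intro J_invariant_span) (auto intro: span_base)
qed

lemma J_hull_base: "x \<in> S \<Longrightarrow> x \<in> J_hull S"
  by (simp add: J_hull_def span_base)

lemma J_hull_minimal: "subspace W \<Longrightarrow> J_invariant W \<Longrightarrow> S \<subseteq> W \<Longrightarrow> J_hull S \<subseteq> W"
  unfolding J_hull_def J_invariant_def by (intro span_minimal) auto

lemma J_hull_subspace_decompose:
  assumes "subspace S" "x \<in> J_hull S"
  obtains a b where "a \<in> S" "b \<in> S" "x = a + J b"
proof -
  have "span S = S"
    using assms(1) by simp
  moreover have "span (J ` S) = J ` S"
    using span_linear_image[OF linear_J, of S] \<open>span S = S\<close> by simp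
  ultimately show ?thesis
    using assms(2) that unfolding J_hull_def span_Un by (auto simp only:)
qed

lemma J_not_in_span_insert:
  assumes W: "subspace W" "J_invariant W" and "s \<notin> W"
  shows "J s \<notin> span (insert s W)"
proof
  assume "J s \<in> span (insert s W)"
  moreover have "span W = W"
    using W(1) by simp
  ultimately obtain k where k: "J s - k *\<^sub>R s \<in> W"
    using span_breakdown_eq[of "J s" s W] by auto
  have "J (J s - k *\<^sub>R s) \<in> W"
    using W(2) k by (rule J_invariantD)
  then have "J (J s - k *\<^sub>R s) + k *\<^sub>R (J s - k *\<^sub>R s) \<in> W"
    using W(1) k by (simp only: subspace_add subspace_scale)
  moreover have "J (J s - k *\<^sub>R s) + k *\<^sub>R (J s - k *\<^sub>R s) = - (1 + k\<^sup>2) *\<^sub>R s"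
    by (simp add: algebra_simps power2_eq_square)
  ultimately have "inverse (- (1 + k\<^sup>2)) *\<^sub>R (- (1 + k\<^sup>2)) *\<^sub>R s \<in> W"
    using W(1) by (metis subspace_scale)
  moreover have "- (1 + k\<^sup>2) \<noteq> 0"
    using zero_le_power2[of k] by linarith
  ultimately show False
    using \<open>s \<notin> W\<close> by simp
qed

lemma J_not_in_span_singleton: "t \<noteq> 0 \<Longrightarrow> J t \<notin> span {t}"
  using J_not_in_span_insert[OF subspace_single_0 J_invariant_zero, of t] by (simp add: insert_commute)

lemma span_singleton_Int_span_J:
  assumes "x \<in> span {t}" "x \<in> span {J t}"
  shows "x = 0"
proof -
  obtain c where c: "x = c *\<^sub>R t"
    using assms(1) by (auto simp: span_singleton)
  obtain d where d: "x = d *\<^sub>R J t"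
    using assms(2) by (auto simp: span_singleton)
  show "x = 0"
  proof (cases "d = 0 \<or> t = 0")
    case False
    then have "J t = inverse d *\<^sub>R (d *\<^sub>R J t)"
      by simp
    also have "\<dots> = (c / d) *\<^sub>R t"
      using c d by (simp add: divide_inverse_commute)
    finally have "J t \<in> span {t}"
      by (simp add: span_base span_scale)
    with False J_not_in_span_singleton show ?thesis
      by blast
  qed (use d in auto)
qed

lemma dim_J_pair: "t \<noteq> 0 \<Longrightarrow> dim {J t, t} = 2"
  using J_not_in_span_singleton[of t] by (simp add: dim_insert)

lemma J_invariant_span_insert_J:
  "J_invariant W \<Longrightarrow> J_invariant (span (insert (J s) (insert s W)))"
  by (rule J_invariant_span) (auto intro: span_base span_neg dest: J_invariantD)

lemma dim_span_insert_J:
  assumes "subspace W" "J_invariant W" "s \<notin> W"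
  shows "dim (span (insert (J s) (insert s W))) = dim W + 2"
proof -
  have "span W = W"
    using assms(1) by simp
  then show ?thesis
    using J_not_in_span_insert[OF assms] assms(3) by (simp add: dim_insert del: span_eq_iff)
qed

lemma span_insert_J_subset:
  assumes "subspace W" "J_invariant W" "s \<in> W" "V \<subseteq> W"
  shows "span (insert (J s) (insert s V)) \<subseteq> W"
  using assms by (intro span_minimal) (simp_all add: J_invariantD)

lemma exists_J_invariant_between:
  assumes V: "subspace V" "J_invariant V" and W: "subspace W" "J_invariant W"
    and "V \<subseteq> W" "dim V + 2 * n \<le> dim W"
  shows "\<exists>V'. V \<subseteq> V' \<and> V' \<subseteq> W \<and> subspace V' \<and> J_invariant V' \<and>
    dim V' = dim V + 2 * n"
  using assms(6)
proof (induction n)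
  case 0
  show ?case
    using V \<open>V \<subseteq> W\<close> by (intro exI[of _ V]) simp
next
  case (Suc n)
  then obtain V' where V': "V \<subseteq> V'" "V' \<subseteq> W" "subspace V'" "J_invariant V'"
    "dim V' = dim V + 2 * n" by auto
  then have "\<not> W \<subseteq> V'"
    using Suc.prems V'(5) dim_subset[of W V'] by auto
  then obtain s where s: "s \<in> W" "s \<notin> V'"
    by blast
  let ?V'' = "span (insert (J s) (insert s V'))"
  show ?case
    using V' s dim_span_insert_J[OF V'(3,4) s(2)] J_invariant_span_insert_J[OF V'(4)]
      span_insert_J_subset[OF W s(1) V'(2)]
    by (intro exI[of _ ?V'']) (auto intro: span_base)
qed

lemma even_dim_J_invariant:
  assumes W: "subspace W" "J_invariant W"
  shows "even (dim W)"
proof (rule ccontr)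
  assume "odd (dim W)"
  have "{0} \<subseteq> W" "dim {0::'a} + 2 * (dim W div 2) \<le> dim W"
    using W(1) subspace_0 by auto
  then obtain V where V: "V \<subseteq> W" "subspace V" "J_invariant V"
    "dim V = dim {0::'a} + 2 * (dim W div 2)"
    using exists_J_invariant_between[OF subspace_single_0 J_invariant_zero W] by blast
  then have "dim V + 1 = dim W"
    using \<open>odd (dim W)\<close> by simp
  then have "\<not> W \<subseteq> V"
    using dim_subset[of W V] by auto
  then obtain s where s: "s \<in> W" "s \<notin> V"
    by blast
  from dim_subset[OF span_insert_J_subset[OF W s(1) V(1)]] show False
    using dim_span_insert_J[OF V(2,3) s(2)] \<open>dim V + 1 = dim W\<close> by linarith
qed

end

section \<open>Lie algebras and Engel's lemma\<close>

locale real_lie_algebra =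
  fixes br :: "'a::euclidean_space \<Rightarrow> 'a \<Rightarrow> 'a"
  assumes lie: "lie_algebra br"
begin

lemma bilinear_br: "bilinear br"
  using lie unfolding lie_algebra_def by blast

lemma br_self [simp]: "br x x = 0"
  using lie unfolding lie_algebra_def by blast

lemma jacobi: "br x (br y z) + br y (br z x) + br z (br x y) = 0"
  using lie unfolding lie_algebra_def by blast

lemmas br_simps [simp] =
  bilinear_ladd[OF bilinear_br] bilinear_radd[OF bilinear_br]
  bilinear_lmul[OF bilinear_br] bilinear_rmul[OF bilinear_br]
  bilinear_lneg[OF bilinear_br] bilinear_rneg[OF bilinear_br]
  bilinear_lsub[OF bilinear_br] bilinear_rsub[OF bilinear_br]
  bilinear_lzero[OF bilinear_br] bilinear_rzero[OF bilinear_br]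

lemma br_anticomm: "br y x = - br x y"
proof -
  have "br y x + br x y = 0"
    using br_self[of "x + y"] by (simp only: br_simps) simp
  then show ?thesis
    by (simp add: eq_neg_iff_add_eq_0)
qed

definition lie_subalgebra :: "'a set \<Rightarrow> bool" where
  "lie_subalgebra U \<longleftrightarrow> subspace U \<and> (\<forall>x\<in>U. \<forall>y\<in>U. br x y \<in> U)"

definition commutator_space :: "'a set \<Rightarrow> 'a set \<Rightarrow> 'a set" where
  "commutator_space A B = span {br a b | a b. a \<in> A \<and> b \<in> B}"

lemma br_in_commutator_space: "a \<in> A \<Longrightarrow> b \<in> B \<Longrightarrow> br a b \<in> commutator_space A B"
  unfolding commutator_space_def by (blast intro: span_base)

lemma commutator_space_subset:
  "subspace W \<Longrightarrow> (\<And>a b. a \<in> A \<Longrightarrow> b \<in> B \<Longrightarrow> br a b \<in> W) \<Longrightarrow>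
    commutator_space A B \<subseteq> W"
  unfolding commutator_space_def by (intro span_minimal) auto

lemma subspace_lower_central: "subspace (lower_central br k)"
  by (cases k) simp_all

lemma br_in_lower_central_right: "y \<in> lower_central br k \<Longrightarrow> br x y \<in> lower_central br (Suc k)"
  by (auto intro: span_base)

lemma br_in_lower_central_left: "x \<in> lower_central br k \<Longrightarrow> br x y \<in> lower_central br (Suc k)"
  using br_in_lower_central_right[of x k y] subspace_neg[OF subspace_lower_central]
  by (metis br_anticomm minus_minus)

primrec lower_central_of :: "'a set \<Rightarrow> nat \<Rightarrow> 'a set" where
  "lower_central_of U 0 = U"
| "lower_central_of U (Suc k) = commutator_space (lower_central_of U k) U"

lemma lower_central_of_subset_lower_central: "lower_central_of U k \<subseteq> lower_central br k"
proof (induction k)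
  case (Suc k)
  show ?case
    unfolding lower_central_of.simps
    by (rule commutator_space_subset[OF subspace_lower_central])
      (use Suc br_in_lower_central_left in blast)
qed simp

lemma lower_central_of_subalgebra:
  assumes "lie_subalgebra U"
  shows "subspace (lower_central_of U k)" "lower_central_of U k \<subseteq> U"
proof -
  show "lower_central_of U k \<subseteq> U"
  proof (induction k)
    case (Suc k)
    then show ?case
      using assms unfolding lie_subalgebra_def lower_central_of.simps
      by (intro commutator_space_subset) auto
  qed simp
  show "subspace (lower_central_of U k)"
    using assms by (cases k) (simp_all add: lie_subalgebra_def commutator_space_def)
qed

definition center_of :: "'a set \<Rightarrow> 'a set" where
  "center_of U = {v \<in> U. \<forall>u\<in>U. br u v = 0}"

lemma br_in_center_of:
  assumes U: "\<And>x y. br x y \<in> U" and v: "v \<in> center_of U"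
  shows "br x v \<in> center_of U"
proof -
  have "br u (br x v) = 0" if "u \<in> U" for u
  proof -
    have "br u v = 0" "br (br u x) v = 0"
      using v that U unfolding center_of_def by blast+
    then have "br v u = 0" "br v (br u x) = 0"
      by (simp_all add: br_anticomm[of u v] br_anticomm[of "br u x" v])
    then show ?thesis
      using jacobi[of u x v] by simp
  qed
  then show ?thesis
    using U unfolding center_of_def by blast
qed

end

locale nilpotent_lie_algebra = real_lie_algebra +
  assumes nilpotent: "nilpotent_lie br"
begin

lemma exists_ad_into_subspace:
  assumes M: "\<And>s m. s \<in> S \<Longrightarrow> m \<in> M \<Longrightarrow> br s m \<in> M"
    and N: "subspace N" and "\<not> M \<subseteq> N"
  shows "\<exists>v\<in>M. v \<notin> N \<and> (\<forall>s\<in>S. br s v \<in> N)"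
proof -
  obtain K where "lower_central br K = {0}"
    using nilpotent unfolding nilpotent_lie_def by blast
  then have "M \<inter> lower_central br K \<subseteq> N"
    using subspace_0[OF N] by auto
  moreover have "\<not> M \<inter> lower_central br 0 \<subseteq> N"
    using assms(3) by simp
  ultimately obtain k
    where k: "\<not> M \<inter> lower_central br k \<subseteq> N" "M \<inter> lower_central br (Suc k) \<subseteq> N"
    using ex_least_nat_less[of "\<lambda>k. M \<inter> lower_central br k \<subseteq> N" K] by blast
  then obtain v where v: "v \<in> M" "v \<in> lower_central br k" "v \<notin> N"
    by blast
  have "br s v \<in> N" if "s \<in> S" for s
    using M[OF that v(1)] br_in_lower_central_right[OF v(2)] k(2) by blast
  with v show ?thesis
    by blast
qed

lemma exists_ad_into_span:
  assumes "\<And>s m. s \<in> S \<Longrightarrow> m \<in> M \<Longrightarrow> br s m \<in> M" "finite F" "card F < dim M"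
  shows "\<exists>v\<in>M. v \<notin> span F \<and> (\<forall>s\<in>S. br s v \<in> span F)"
proof (rule exists_ad_into_subspace[OF assms(1) subspace_span])
  show "\<not> M \<subseteq> span F"
    using dim_le_card[of M F] assms(2,3) by auto
qed

end

section \<open>Nilpotent Lie algebras with a complex structure\<close>

locale integrable_complex_structure = real_lie_algebra br + linear_complex_structure J
  for br :: "'a::euclidean_space \<Rightarrow> 'a \<Rightarrow> 'a" and J :: "'a \<Rightarrow> 'a" +
  assumes integrable: "br (J x) (J y) = br x y + J (br (J x) y) + J (br x (J y))"
begin

text \<open>Writing x = a + J b and y = c + J d with a, b, c, d \<in> S, integrability rewrites [J b, J d],
  the only term of [x, y] without an entry from S.\<close>
lemma br_in_J_hull_commutator_space:
  assumes U: "J_invariant U" and S: "subspace S" "S \<subseteq> U" "U \<subseteq> J_hull S"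
    and "x \<in> U" "y \<in> U"
  shows "br x y \<in> J_hull (commutator_space S U)"
proof -
  let ?H = "J_hull (commutator_space S U)"
  have left: "br s u \<in> ?H" if "s \<in> S" "u \<in> U" for s u
    using that by (simp add: br_in_commutator_space J_hull_base)
  have right: "br u s \<in> ?H" if "s \<in> S" "u \<in> U" for s u
    using subspace_neg[OF subspace_J_hull left[OF that]] by (simp add: br_anticomm[of s u])
  have J_H: "J z \<in> ?H" if "z \<in> ?H" for z
    using J_invariant_J_hull that by (rule J_invariantD)
  obtain a b where ab: "a \<in> S" "b \<in> S" "x = a + J b"
    using J_hull_subspace_decompose[OF S(1)] S(3) \<open>x \<in> U\<close> by blast
  obtain c d where cd: "c \<in> S" "d \<in> S" "y = c + J d"
    using J_hull_subspace_decompose[OF S(1)] S(3) \<open>y \<in> U\<close> by blast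
  have "J b \<in> U" "J d \<in> U" "d \<in> U"
    using ab cd S(2) U by (auto dest: J_invariantD)
  then have "br a y \<in> ?H" "br (J b) c \<in> ?H" "br b d \<in> ?H"
    "J (br (J b) d) \<in> ?H" "J (br b (J d)) \<in> ?H"
    using left[OF ab(1) \<open>y \<in> U\<close>] right[OF cd(1)] left[OF ab(2)] right[OF cd(2)] left[OF ab(2)] J_H
    by blast+
  moreover have "br x y = br a y + br (J b) c + br b d + J (br (J b) d) + J (br b (J d))"
    using ab cd by (simp add: integrable add.assoc)
  ultimately show ?thesis
    by (simp add: subspace_add[OF subspace_J_hull])
qed

end

locale nilpotent_complex_structure = integrable_complex_structure br J + nilpotent_lie_algebra br
  for br :: "'a::euclidean_space \<Rightarrow> 'a \<Rightarrow> 'a" and J :: "'a \<Rightarrow> 'a"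

lemma nilpotent_complex_structureI:
  "lie_algebra br \<Longrightarrow> nilpotent_lie br \<Longrightarrow> complex_structure br J \<Longrightarrow>
    nilpotent_complex_structure br J"
  by (simp add: nilpotent_complex_structure_def integrable_complex_structure_def
      integrable_complex_structure_axioms_def nilpotent_lie_algebra_def
      nilpotent_lie_algebra_axioms_def real_lie_algebra_def linear_complex_structure_def
      complex_structure_def)

context nilpotent_complex_structure
begin

lemma J_hull_commutator_space_proper:
  assumes U: "lie_subalgebra U" "J_invariant U" "U \<noteq> {0}"
  shows "\<not> U \<subseteq> J_hull (commutator_space U U)"
proof
  assume H: "U \<subseteq> J_hull (commutator_space U U)"
  have U_hull: "U \<subseteq> J_hull (lower_central_of U k)" for k
  proof (induction k)
    case 0
    then show ?case
      by (auto intro: J_hull_base)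
  next
    case (Suc k)
    have "commutator_space U U \<subseteq> J_hull (lower_central_of U (Suc k))"
      using br_in_J_hull_commutator_space[OF U(2) lower_central_of_subalgebra[OF U(1)] Suc]
      by (intro commutator_space_subset subspace_J_hull) simp
    then have "J_hull (commutator_space U U) \<subseteq> J_hull (lower_central_of U (Suc k))"
      by (intro J_hull_minimal subspace_J_hull J_invariant_J_hull)
    with H show ?case
      by blast
  qed
  obtain K where "lower_central br K = {0}"
    using nilpotent unfolding nilpotent_lie_def by blast
  then have "J_hull (lower_central_of U K) \<subseteq> {0}"
    using lower_central_of_subset_lower_central[of U K]
    by (intro J_hull_minimal subspace_single_0 J_invariant_zero) simp
  with U_hull[of K] U(1,3) show False
    unfolding lie_subalgebra_def by (blast dest: subspace_0)
qed

lemma J_hull_commutator_space_subset_dim_less: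
  assumes U: "lie_subalgebra U" "J_invariant U" "U \<noteq> {0}"
  shows "J_hull (commutator_space U U) \<subseteq> U" "dim (J_hull (commutator_space U U)) < dim U"
proof -
  show sub: "J_hull (commutator_space U U) \<subseteq> U"
    using U(1,2) unfolding lie_subalgebra_def by (intro J_hull_minimal commutator_space_subset) auto
  have "subspace U"
    using U(1) unfolding lie_subalgebra_def by blast
  with sub J_hull_commutator_space_proper[OF U] show "dim (J_hull (commutator_space U U)) < dim U"
    using dim_psubset[of "J_hull (commutator_space U U)" U] subspace_J_hull
    by (simp add: psubset_eq span_eq_iff[THEN iffD2])
qed

lemma exists_J_invariant_ideal_codim2:
  assumes "DIM('a) = n + 2"
  shows "\<exists>U. subspace U \<and> J_invariant U \<and> dim U = n \<and> (\<forall>x y. br x y \<in> U)"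
proof -
  let ?Q = "J_hull (commutator_space UNIV UNIV)"
  have "lie_subalgebra UNIV"
    by (simp add: lie_subalgebra_def)
  moreover have "UNIV \<noteq> {0::'a}"
    using assms dim_eq_0[of "UNIV :: 'a set"] by auto
  ultimately have "dim ?Q < n + 2"
    using J_hull_commutator_space_subset_dim_less(2) J_invariant_UNIV assms by fastforce
  moreover obtain q where q: "dim ?Q = 2 * q"
    using even_dim_J_invariant[OF subspace_J_hull J_invariant_J_hull] by blast
  moreover obtain m where m: "n = 2 * m"
    using even_dim_J_invariant[OF subspace_UNIV J_invariant_UNIV] assms by auto
  ultimately have "dim ?Q + 2 * (m - q) = n"
    by simp
  then obtain U where "?Q \<subseteq> U" "subspace U" "J_invariant U" "dim U = n"
    using exists_J_invariant_between[OF subspace_J_hull J_invariant_J_hull subspace_UNIV J_invariant_UNIV,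
        of "commutator_space UNIV UNIV" "m - q"] assms by auto
  moreover have "br x y \<in> ?Q" for x y
    by (simp add: br_in_commutator_space J_hull_base)
  ultimately show ?thesis
    by blast
qed

text \<open>By Engel's lemma inside span {J t, t}, ad (J t) maps U into span {t}; by integrability it
  commutes with J on U, so its image also lies in span {J t}.\<close>
lemma br_J_eq_0_of_central:
  assumes U: "subspace U" "J_invariant U" and "t \<noteq> 0"
    and central: "\<And>u. u \<in> U \<Longrightarrow> br u t = 0"
    and into: "\<And>u. u \<in> U \<Longrightarrow> br u (J t) \<in> span {J t, t}"
    and "u \<in> U"
  shows "br u (J t) = 0"
proof -
  have into_t: "br y (J t) \<in> span {t}" if y: "y \<in> U" for y
  proof -
    have "br y m \<in> span {J t, t}" if m: "m \<in> span {J t, t}" for m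
    proof -
      obtain b a where "m = b *\<^sub>R J t + a *\<^sub>R t"
        using span_pairE[OF m] .
      then show ?thesis
        using into[OF y] central[OF y] by (simp add: span_scale)
    qed
    moreover have "card {t} < dim (span {J t, t})"
      using dim_J_pair[OF \<open>t \<noteq> 0\<close>] by simp
    ultimately obtain v where v: "v \<in> span {J t, t}" "v \<notin> span {t}" "br y v \<in> span {t}"
      using exists_ad_into_span[of "{y}" "span {J t, t}" "{t}"] by auto
    obtain b a where v_eq: "v = b *\<^sub>R J t + a *\<^sub>R t"
      using span_pairE[OF v(1)] .
    have "b \<noteq> 0"
      using v(2) v_eq by (auto simp: span_base span_scale)
    have "br y v = b *\<^sub>R br y (J t)"
      using v_eq central[OF y] by simp
    then have "br y (J t) = inverse b *\<^sub>R br y v"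
      using \<open>b \<noteq> 0\<close> by simp
    then show ?thesis
      using v(3) by (simp add: span_scale)
  qed
  obtain w where w: "w \<in> U" "J w = u"
    using J_invariantD[OF U(2) \<open>u \<in> U\<close>] subspace_neg[OF U(1)] by (metis J_J minus_minus)
  obtain c where c: "br w (J t) = c *\<^sub>R t"
    using into_t[OF w(1)] by (auto simp: span_singleton)
  have "br u (J t) = J (br w (J t))"
    using integrable[of w t] central w \<open>u \<in> U\<close> by simp
  then have "br u (J t) \<in> span {J t}"
    using c by (simp add: span_base span_scale)
  then show ?thesis
    using into_t[OF \<open>u \<in> U\<close>] span_singleton_Int_span_J by blast
qed

lemma exists_J_central_vector:
  assumes U: "lie_subalgebra U" "J_invariant U" "U \<noteq> {0}" "dim U \<le> 4"
  shows "\<exists>t\<in>U. t \<noteq> 0 \<and> (\<forall>u\<in>U. br u t = 0 \<and> br u (J t) = 0)"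
proof -
  let ?Q = "J_hull (commutator_space U U)"
  have "subspace U"
    using U(1) unfolding lie_subalgebra_def by blast
  have br_Q: "br x y \<in> ?Q" if "x \<in> U" "y \<in> U" for x y
    using that by (simp add: br_in_commutator_space J_hull_base)
  show ?thesis
  proof (cases "?Q = {0}")
    case True
    obtain t where "t \<in> U" "t \<noteq> 0"
      using U(3) subspace_0[OF \<open>subspace U\<close>] by blast
    moreover have "J t \<in> U"
      using U(2) \<open>t \<in> U\<close> by (rule J_invariantD)
    ultimately show ?thesis
      using True br_Q by blast
  next
    case False
    have "?Q \<subseteq> U" "dim ?Q < dim U"
      using J_hull_commutator_space_subset_dim_less[OF U(1-3)] by blast+
    moreover have "dim ?Q \<noteq> 0"
      using False subspace_0[OF subspace_J_hull] by auto
    moreover obtain q where "dim ?Q = 2 * q"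
      using even_dim_J_invariant[OF subspace_J_hull J_invariant_J_hull] by blast
    ultimately have dim_Q: "dim ?Q = 2"
      using U(4) by presburger
    have "br s q \<in> ?Q" if "s \<in> U" "q \<in> ?Q" for s q
      using that \<open>?Q \<subseteq> U\<close> br_Q by blast
    then obtain t where t: "t \<in> ?Q" "t \<noteq> 0" "\<forall>u\<in>U. br u t = 0"
      using exists_ad_into_span[of U ?Q "{}"] dim_Q by auto
    have "J t \<in> ?Q"
      using J_invariant_J_hull t(1) by (rule J_invariantD)
    have "span {J t, t} \<subseteq> ?Q"
      using t(1) \<open>J t \<in> ?Q\<close> by (simp add: span_minimal subspace_J_hull)
    then have Q_eq: "span {J t, t} = ?Q"
      using dim_J_pair[OF t(2)] dim_Q by (simp add: subspace_dim_equal subspace_J_hull)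
    have "t \<in> U" "J t \<in> U"
      using t(1) \<open>J t \<in> ?Q\<close> \<open>?Q \<subseteq> U\<close> by auto
    then have "br u (J t) = 0" if "u \<in> U" for u
      using br_J_eq_0_of_central[OF \<open>subspace U\<close> U(2) t(2) _ _ that] t(3) br_Q Q_eq by simp
    with t \<open>t \<in> U\<close> show ?thesis
      by blast
  qed
qed

lemma exists_flag_basis:
  assumes U: "subspace U" "J_invariant U" "dim U = 4" "\<And>x y. br x y \<in> U"
  obtains x3 x4 x5 x6 where "span {x3, x4, x5, x6} = U"
    "\<And>x. br x x3 \<in> span {x4, x5, x6}" "\<And>x. br x x4 \<in> span {x5, x6}"
    "\<And>x. br x x5 \<in> span {x6}" "\<And>x. br x x6 = 0"
    "br x3 x5 = 0" "br x4 x5 = 0"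
proof -
  have "lie_subalgebra U"
    using U(1,4) by (simp add: lie_subalgebra_def)
  moreover have "U \<noteq> {0}"
    using U(3) by auto
  ultimately obtain t where t: "t \<in> U" "t \<noteq> 0" "\<forall>u\<in>U. br u t = 0 \<and> br u (J t) = 0"
    using exists_J_central_vector U(2,3) by force
  let ?Z = "center_of U"
  have "{J t, t} \<subseteq> ?Z"
    using t J_invariantD[OF U(2) t(1)] unfolding center_of_def by auto
  then have "2 \<le> dim ?Z"
    using dim_subset dim_J_pair[OF t(2)] by metis
  have "?Z \<subseteq> U"
    unfolding center_of_def by blast
  have Z_ideal: "br x v \<in> ?Z" if "v \<in> ?Z" for x v
    using br_in_center_of U(4) that by blast
  have card_pair: "card {a, b} < 4" and card_triple: "card {a, b, c} < 4" for a b c :: 'a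
    by (simp_all add: card_insert_if)
  obtain x6 where x6: "x6 \<in> ?Z" "x6 \<notin> span {}" "\<And>x. br x x6 \<in> span {}"
    using exists_ad_into_span[of UNIV ?Z "{}"] Z_ideal \<open>2 \<le> dim ?Z\<close> by auto
  obtain x5 where x5: "x5 \<in> ?Z" "x5 \<notin> span {x6}" "\<And>x. br x x5 \<in> span {x6}"
    using exists_ad_into_span[of UNIV ?Z "{x6}"] Z_ideal \<open>2 \<le> dim ?Z\<close> by auto
  obtain x4 where x4: "x4 \<in> U" "x4 \<notin> span {x5, x6}" "\<And>x. br x x4 \<in> span {x5, x6}"
    using exists_ad_into_span[of UNIV U "{x5, x6}"] U(3,4) card_pair by auto
  obtain x3 where x3: "x3 \<in> U" "x3 \<notin> span {x4, x5, x6}" "\<And>x. br x x3 \<in> span {x4, x5, x6}"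
    using exists_ad_into_span[of UNIV U "{x4, x5, x6}"] U(3,4) card_triple by auto
  have "dim {x3, x4, x5, x6} = 4"
    using x3(2) x4(2) x5(2) x6(2) by (simp add: dim_insert)
  moreover have "span {x3, x4, x5, x6} \<subseteq> U"
    using x3 x4 x5 x6 \<open>?Z \<subseteq> U\<close> U(1) by (intro span_minimal) auto
  ultimately have "span {x3, x4, x5, x6} = U"
    using U(1,3) by (simp add: subspace_dim_equal)
  moreover have "br x3 x5 = 0" "br x4 x5 = 0"
    using x3(1) x4(1) x5(1) unfolding center_of_def by auto
  ultimately show ?thesis
    using that x3(3) x4(3) x5(3) x6(3) by simp
qed

lemma exists_adapted_basis:
  assumes "DIM('a) = 6"
  obtains x1 x3 x4 x5 x6 where "span {x1, J x1, x3, x4, x5, x6} = UNIV"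
    "\<And>x y. br x y \<in> span {x3, x4, x5, x6}" "J_invariant (span {x3, x4, x5, x6})"
    "\<And>x. br x x3 \<in> span {x4, x5, x6}" "\<And>x. br x x4 \<in> span {x5, x6}"
    "\<And>x. br x x5 \<in> span {x6}" "\<And>x. br x x6 = 0"
    "br x3 x5 = 0" "br x4 x5 = 0"
proof -
  obtain U where U: "subspace U" "J_invariant U" "dim U = 4" "\<And>x y. br x y \<in> U"
    using exists_J_invariant_ideal_codim2[of 4] assms by auto
  obtain x3 x4 x5 x6 where U_eq: "span {x3, x4, x5, x6} = U"
    and flag: "\<And>x. br x x3 \<in> span {x4, x5, x6}" "\<And>x. br x x4 \<in> span {x5, x6}"
      "\<And>x. br x x5 \<in> span {x6}" "\<And>x. br x x6 = 0"
    and central: "br x3 x5 = 0" "br x4 x5 = 0"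
    using exists_flag_basis[OF U] by blast
  have "U \<noteq> UNIV"
    using U(3) assms by auto
  then obtain x1 where "x1 \<notin> U"
    by blast
  let ?B = "{x1, J x1, x3, x4, x5, x6}"
  have "U \<subseteq> span ?B"
    unfolding U_eq[symmetric] by (rule span_mono) auto
  then have "insert (J x1) (insert x1 U) \<subseteq> span ?B"
    by (simp add: span_base)
  then have "dim (insert (J x1) (insert x1 U)) \<le> dim ?B"
    using dim_subset[of "insert (J x1) (insert x1 U)" "span ?B"] by simp
  moreover have "dim (insert (J x1) (insert x1 U)) = 6"
    using dim_span_insert_J[OF U(1,2) \<open>x1 \<notin> U\<close>] U(3) by simp
  ultimately have "dim ?B = DIM('a)"
    using dim_subset_UNIV[of ?B] assms by linarith
  then have "span ?B = UNIV"
    by (simp only: dim_eq_full)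
  then show ?thesis
    using that U(2,4) U_eq flag central by blast
qed

end

section \<open>Adapted frames and their dual coframes\<close>

text \<open>X 1, ..., X 6 is the basis dual to the coframe e of the theorem: as d e^k (X a, X b) =
  - e^k [X a, X b], conditions on brackets of the X j become conditions on the d e^k.\<close>
locale adapted_frame = real_lie_algebra br + linear_complex_structure J
  for br :: "'a::euclidean_space \<Rightarrow> 'a \<Rightarrow> 'a" and J :: "'a \<Rightarrow> 'a" +
  fixes X :: "nat \<Rightarrow> 'a"
  assumes X2_eq: "X 2 = J (X 1)"
    and span_frame: "span (X ` {1..6}) = UNIV"
    and br_in_span_frame: "br x y \<in> span (X ` {3..6})"
    and J_invariant_span_frame: "J_invariant (span (X ` {3..6}))"
    and br_frame_flag: "b \<in> {3..6} \<Longrightarrow> br x (X b) \<in> span (X ` {Suc b..6})"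
    and br_X3_X5: "br (X 3) (X 5) = 0"
    and br_X4_X5: "br (X 4) (X 5) = 0"

lemma (in nilpotent_complex_structure) exists_adapted_frame:
  assumes "DIM('a) = 6"
  shows "\<exists>X. adapted_frame br J X"
proof -
  obtain x1 x3 x4 x5 x6 where span: "span {x1, J x1, x3, x4, x5, x6} = UNIV"
    and ideal: "\<And>x y. br x y \<in> span {x3, x4, x5, x6}" "J_invariant (span {x3, x4, x5, x6})"
    and flag: "\<And>x. br x x3 \<in> span {x4, x5, x6}" "\<And>x. br x x4 \<in> span {x5, x6}"
      "\<And>x. br x x5 \<in> span {x6}" "\<And>x. br x x6 = 0"
    and central: "br x3 x5 = 0" "br x4 x5 = 0"
    using exists_adapted_basis[OF assms] by blast
  define X where "X n = [x1, J x1, x3, x4, x5, x6] ! (n - 1)" for n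
  have X: "X 1 = x1" "X 2 = J x1" "X 3 = x3" "X 4 = x4" "X 5 = x5" "X 6 = x6"
    by (simp_all add: X_def)
  have intervals: "{1..6::nat} = {1, 2, 3, 4, 5, 6}" "{3..6::nat} = {3, 4, 5, 6}"
    "{4..6::nat} = {4, 5, 6}" "{5..6::nat} = {5, 6}" "{6..6::nat} = {6}" "{7..6::nat} = {}"
    by auto
  have "br x (X b) \<in> span (X ` {Suc b..6})" if "b \<in> {3..6}" for x b
  proof -
    have "b = 3 \<or> b = 4 \<or> b = 5 \<or> b = 6"
      using that by auto
    then show ?thesis
      by (elim disjE) (simp_all add: flag X intervals)
  qed
  moreover have "X 2 = J (X 1)"
    by (simp only: X)
  moreover have "span (X ` {1..6}) = UNIV"
    using span by (simp only: intervals image_insert image_empty X)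
  ultimately have "adapted_frame br J X"
    using ideal central
    by (intro adapted_frame.intro adapted_frame_axioms.intro real_lie_algebra_axioms
        linear_complex_structure_axioms) (simp_all add: X intervals)
  then show ?thesis
    by blast
qed

lemma (in adapted_frame) br_X_outside:
  assumes "1 \<le> a" "a < b" "b < 6"
    and "(a, b) \<notin> {(1,2),(1,3),(1,4),(1,5),(2,3),(2,4),(2,5),(3,4)}"
  shows "br (X a) (X b) = 0"
proof -
  have "a = 3 \<and> b = 5 \<or> a = 4 \<and> b = 5"
    using assms by simp presburger
  then show ?thesis
    using br_X3_X5 br_X4_X5 by auto
qed

lemma sum_wedge_dual_frame:
  assumes e_X: "\<And>k j. k \<in> I \<Longrightarrow> j \<in> I \<Longrightarrow> e k (X j) = (if k = j then 1 else 0)"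
    and S: "finite S" "S \<subseteq> I \<times> I" and "a \<in> I" "b \<in> I"
  shows "(\<Sum>(i, j)\<in>S. c (i, j) * wedge (e i) (e j) (X a) (X b)) =
    (if (a, b) \<in> S then c (a, b) else 0) - (if (b, a) \<in> S then c (b, a) else 0)"
proof -
  have "(\<Sum>(i, j)\<in>S. c (i, j) * wedge (e i) (e j) (X a) (X b)) =
      (\<Sum>p\<in>S. (if p = (a, b) then c p else 0) - (if p = (b, a) then c p else 0))"
  proof (rule sum.cong[OF refl])
    fix p assume "p \<in> S"
    then obtain i j where "p = (i, j)" "i \<in> I" "j \<in> I"
      using S(2) by blast
    then show "(case p of (i, j) \<Rightarrow> c (i, j) * wedge (e i) (e j) (X a) (X b)) =
        (if p = (a, b) then c p else 0) - (if p = (b, a) then c p else 0)"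
      unfolding wedge_def
      using e_X[OF \<open>i \<in> I\<close> \<open>a \<in> I\<close>] e_X[OF \<open>j \<in> I\<close> \<open>b \<in> I\<close>]
        e_X[OF \<open>j \<in> I\<close> \<open>a \<in> I\<close>] e_X[OF \<open>i \<in> I\<close> \<open>b \<in> I\<close>]
      by (cases "i = a"; cases "j = b"; cases "j = a"; cases "i = b") simp_all
  qed
  also have "\<dots> = (if (a, b) \<in> S then c (a, b) else 0) - (if (b, a) \<in> S then c (b, a) else 0)"
    using S(1) by (simp add: sum_subtractf sum.delta')
  finally show ?thesis .
qed

lemma bilinear_sum_wedge:
  assumes "\<And>k. linear (e k)"
  shows "bilinear (\<lambda>x y. \<Sum>(i, j)\<in>S. c (i, j) * wedge (e i) (e j) x y)"
  unfolding bilinear_def linear_iff wedge_def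
  by (simp add: linear_add[OF assms] linear_scale[OF assms] sum.distrib[symmetric] sum_distrib_left
      algebra_simps case_prod_unfold)

lemma exists_dual_coframe:
  fixes X :: "nat \<Rightarrow> 'a::euclidean_space"
  assumes span: "span (X ` {1..n}) = UNIV" and dim: "DIM('a) = n"
  shows "\<exists>e :: nat \<Rightarrow> 'a \<Rightarrow> real. (\<forall>k. linear (e k)) \<and>
    (\<forall>k\<in>{1..n}. \<forall>j\<in>{1..n}. e k (X j) = (if k = j then 1 else 0))"
proof -
  let ?B = "X ` {1..n}"
  have "card ?B \<le> n"
    using card_image_le[of "{1..n}" X] by simp
  moreover have "n \<le> card ?B"
    using dim_le_card[of UNIV ?B] span dim by simp
  ultimately have card: "card ?B = n"
    by simp
  then have "independent ?B"
    using card_eq_dim[of ?B UNIV] span dim by simp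
  have inj: "inj_on X {1..n}"
    using card by (simp add: eq_card_imp_inj_on)
  have "\<exists>f :: 'a \<Rightarrow> real. linear f \<and> (\<forall>j\<in>{1..n}. f (X j) = (if k = j then 1 else 0))" for k
  proof -
    obtain f :: "'a \<Rightarrow> real"
      where f: "linear f" "\<forall>x\<in>?B. f x = (if k \<in> {1..n} \<and> x = X k then 1 else 0)"
      using linear_independent_extend[OF \<open>independent ?B\<close>,
          of "\<lambda>x. if k \<in> {1..n} \<and> x = X k then 1 else 0"] by blast
    have f_X: "f (X j) = (if k = j then 1 else 0)" if "j \<in> {1..n}" for j
    proof -
      have "X j \<in> ?B"
        using that by blast
      then have "f (X j) = (if k \<in> {1..n} \<and> X j = X k then 1 else 0)"
        by (rule bspec[OF f(2)])
      moreover have "(k \<in> {1..n} \<and> X j = X k) \<longleftrightarrow> k = j"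
        using inj that by (auto dest: inj_onD)
      ultimately show ?thesis
        by simp
    qed
    show ?thesis
      using f(1) f_X by (intro exI[of _ f]) simp
  qed
  then have "\<exists>e :: nat \<Rightarrow> 'a \<Rightarrow> real.
      \<forall>k. linear (e k) \<and> (\<forall>j\<in>{1..n}. e k (X j) = (if k = j then 1 else 0))"
    by (intro choice allI)
  then show ?thesis
    by blast
qed

context real_lie_algebra
begin

lemma bilinear_dform: "linear f \<Longrightarrow> bilinear (dform br f)"
  unfolding bilinear_def dform_def linear_iff by (simp add: linear_add linear_scale)

lemma dform_on_frame:
  fixes n :: nat
  assumes f: "linear f"
    and S: "S \<subseteq> {(i, j). 1 \<le> i \<and> i < j \<and> j \<le> n}"
    and vanish: "\<And>a b. 1 \<le> a \<Longrightarrow> a < b \<Longrightarrow> b \<le> n \<Longrightarrow> (a, b) \<notin> S \<Longrightarrow> f (br (X a) (X b)) = 0"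
    and ab: "a \<in> {1..n}" "b \<in> {1..n}"
  shows "dform br f (X a) (X b) =
    (if (a, b) \<in> S then dform br f (X a) (X b) else 0) - (if (b, a) \<in> S then dform br f (X b) (X a) else 0)"
proof -
  have antisym: "dform br f (X a) (X b) = - dform br f (X b) (X a)"
    unfolding dform_def by (simp add: br_anticomm[of "X b"] linear_neg[OF f])
  have vanish': "dform br f (X i) (X j) = 0" if "i \<in> {1..n}" "j \<in> {1..n}" "i < j" "(i, j) \<notin> S" for i j
    using vanish[of i j] that unfolding dform_def by simp
  consider "a < b" | "a = b" | "b < a"
    by linarith
  then show ?thesis
  proof cases
    case 1
    then have "(b, a) \<notin> S"
      using S by auto
    then show ?thesis
      using vanish'[OF ab 1] by simp
  next
    case 2
    then show ?thesis
      by (simp add: dform_def linear_0[OF f])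
  next
    case 3
    then have "(a, b) \<notin> S"
      using S by auto
    then show ?thesis
      using antisym vanish'[OF ab(2,1) 3] by simp
  qed
qed

lemma in_span2_dformI:
  assumes f: "linear f" and e: "\<And>k. linear (e k)"
    and e_X: "\<And>k j. k \<in> {1..n} \<Longrightarrow> j \<in> {1..n} \<Longrightarrow> e k (X j) = (if k = j then 1 else 0)"
    and X: "span (X ` {1..n}) = UNIV"
    and S: "S \<subseteq> {(i, j). 1 \<le> i \<and> i < j \<and> j \<le> n}"
    and vanish: "\<And>a b. 1 \<le> a \<Longrightarrow> a < b \<Longrightarrow> b \<le> n \<Longrightarrow> (a, b) \<notin> S \<Longrightarrow> f (br (X a) (X b)) = 0"
  shows "in_span2 e S (dform br f)"
proof -
  define c where "c = (\<lambda>(i, j). dform br f (X i) (X j))"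
  define g where "g = (\<lambda>x y. \<Sum>(i, j)\<in>S. c (i, j) * wedge (e i) (e j) x y)"
  have S_I: "S \<subseteq> {1..n} \<times> {1..n}"
    using S by auto
  then have "finite S"
    by (rule finite_subset) simp
  have "dform br f (X a) (X b) = g (X a) (X b)" if "a \<in> {1..n}" "b \<in> {1..n}" for a b
  proof -
    have "dform br f (X a) (X b) = (if (a, b) \<in> S then c (a, b) else 0) - (if (b, a) \<in> S then c (b, a) else 0)"
      unfolding c_def prod.case by (rule dform_on_frame[where X=X, OF f S vanish that])
    also have "\<dots> = g (X a) (X b)"
      unfolding g_def
      by (rule sum_wedge_dual_frame[where I="{1..n}" and e=e, OF e_X \<open>finite S\<close> S_I that, symmetric])
    finally show ?thesis .
  qed
  then have on_frame: "dform br f x y = g x y" if "x \<in> X ` {1..n}" "y \<in> X ` {1..n}" for x y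
    using that by blast
  have "bilinear g"
    unfolding g_def by (rule bilinear_sum_wedge[OF e])
  have "dform br f x y = g x y" for x y
    by (rule bilinear_eq[OF bilinear_dform[OF f] \<open>bilinear g\<close> _ _ _ _ on_frame, where S=UNIV and T=UNIV])
      (simp_all only: X order_refl UNIV_I)
  then show ?thesis
    unfolding in_span2_def g_def by blast
qed

end

locale adapted_coframe = adapted_frame +
  fixes e :: "nat \<Rightarrow> 'a \<Rightarrow> real"
  assumes linear_e: "linear (e k)"
    and e_X: "k \<in> {1..6} \<Longrightarrow> j \<in> {1..6} \<Longrightarrow> e k (X j) = (if k = j then 1 else 0)"

lemma (in adapted_frame) exists_adapted_coframe:
  assumes "DIM('a) = 6"
  shows "\<exists>e. adapted_coframe br J X e"
proof -
  obtain e :: "nat \<Rightarrow> 'a \<Rightarrow> real" where "\<forall>k. linear (e k)"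
    "\<forall>k\<in>{1..6}. \<forall>j\<in>{1..6}. e k (X j) = (if k = j then 1 else 0)"
    using exists_dual_coframe[OF span_frame assms] by blast
  then have "adapted_coframe br J X e"
    by (intro adapted_coframe.intro adapted_coframe_axioms.intro adapted_frame_axioms) simp_all
  then show ?thesis
    by blast
qed

context adapted_coframe
begin

lemma dual_basis6_coframe: "dual_basis6 e"
  unfolding dual_basis6_def
proof (intro conjI ballI allI impI)
  fix c :: "nat \<Rightarrow> real" and i :: nat
  assume c: "\<forall>x. (\<Sum>k = 1..6. c k * e k x) = 0" and i: "i \<in> {1..6}"
  have "0 = (\<Sum>k = 1..6. c k * e k (X i))"
    using c by simp
  also have "\<dots> = (\<Sum>k = 1..6. if k = i then c k else 0)"
    by (rule sum.cong[OF refl]) (simp add: e_X[OF _ i])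
  also have "\<dots> = c i"
    using i by simp
  finally show "c i = 0"
    by simp
qed (rule linear_e)

lemma coframe_vanishes:
  assumes "1 \<le> k" "k \<le> b" "v \<in> span (X ` {Suc b..6})"
  shows "e k v = 0"
proof (rule linear_eq_0_on_span[OF linear_e _ assms(3)])
  fix x assume "x \<in> X ` {Suc b..6}"
  then obtain j where "j \<in> {Suc b..6}" "x = X j"
    by blast
  then show "e k x = 0"
    using assms(1,2) e_X[of k j] by auto
qed

lemma coframe_12_vanishes_on_brackets: "e 1 (br x y) = 0" "e 2 (br x y) = 0"
  using coframe_vanishes[of 1 2] coframe_vanishes[of 2 2] br_in_span_frame by simp_all

lemma coframe_J: "e 1 (J x) = - e 2 x" "e 2 (J x) = e 1 x"
proof -
  have X1: "e 1 (X 1) = 1" "e 2 (X 1) = 0" and X2: "e 1 (X 2) = 0" "e 2 (X 2) = 1"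
    using e_X by simp_all
  show first: "e 1 (J x) = - e 2 x" for x
  proof (rule linear_eq_on_span[where B = "X ` {1..6}"])
    show "linear (\<lambda>x. e 1 (J x))" "linear (\<lambda>x. - e 2 x)"
      using linear_compose[OF linear_J linear_e] linear_compose_neg[OF linear_e]
      by (simp_all add: o_def)
    show "x \<in> span (X ` {1..6})"
      using span_frame by blast
    fix y assume "y \<in> X ` {1..6}"
    then obtain j where j: "j \<in> {1..6}" "y = X j"
      by blast
    then consider "j = 1" | "j = 2" | "j \<in> {3..6}"
      by fastforce
    then show "e 1 (J y) = - e 2 y"
    proof cases
      case 1
      then show ?thesis
        using j X1 X2 X2_eq by simp
    next
      case 2
      then show ?thesis
        using j X1 X2 X2_eq linear_neg[OF linear_e] by simp
    next
      case 3
      then have "y \<in> span (X ` {3..6})"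
        using j by (auto intro: span_base)
      then have "J y \<in> span (X ` {3..6})"
        by (rule J_invariantD[OF J_invariant_span_frame])
      moreover have "e 2 y = 0"
        using 3 j e_X by auto
      ultimately show ?thesis
        using coframe_vanishes[of 1 2] by simp
    qed
  qed
  show "e 2 (J x) = e 1 x"
    using first[of "J x"] linear_neg[OF linear_e] by simp
qed

lemma is_form_10_coframe:
  "is_form_10 J (\<lambda>x. complex_of_real (e 1 x) + \<i> * complex_of_real (e 2 x))"
  unfolding is_form_10_def by (simp del: One_nat_def add: coframe_J algebra_simps)

lemma dform_coframe_closed:
  "dform br (\<lambda>x. complex_of_real (e 1 x) + \<i> * complex_of_real (e 2 x)) x y = 0"
  unfolding dform_def by (simp del: One_nat_def add: coframe_12_vanishes_on_brackets)

lemma in_span2_dform_coframe: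
  assumes "3 \<le> k" "k \<le> 6" "S \<subseteq> {(i, j). 1 \<le> i \<and> i < j \<and> j \<le> 6}"
    and "\<And>a b. 1 \<le> a \<Longrightarrow> a < b \<Longrightarrow> b < k \<Longrightarrow> (a, b) \<notin> S \<Longrightarrow> br (X a) (X b) = 0"
  shows "in_span2 e S (dform br (e k))"
proof (rule in_span2_dformI[OF linear_e linear_e e_X span_frame assms(3)])
  fix a b assume ab: "1 \<le> a" "a < b" "b \<le> 6" "(a, b) \<notin> S"
  show "e k (br (X a) (X b)) = 0"
  proof (cases "b < k")
    case True
    then show ?thesis
      using assms(4)[OF ab(1,2) True ab(4)] linear_0[OF linear_e] by simp
  next
    case False
    then show ?thesis
      using assms(1) ab(3) br_frame_flag coframe_vanishes[of k b] by simp
  qed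
qed

end

theorem corollary2p4:
  fixes br :: "'g::euclidean_space \<Rightarrow> 'g \<Rightarrow> 'g" and J :: "'g \<Rightarrow> 'g"
  assumes "DIM('g) = 6"
    and "lie_algebra br"
    and "nilpotent_lie br"
    and "complex_structure br J"
  shows "\<exists>e :: nat \<Rightarrow> 'g \<Rightarrow> real. dual_basis6 e \<and>
     (let \<omega> = (\<lambda>X. complex_of_real (e 1 X) + \<i> * complex_of_real (e 2 X)) in
        is_form_10 J \<omega> \<and> (\<forall>X Y. dform br \<omega> X Y = 0)) \<and>
     in_span2 e {(1,2)} (dform br (e 3)) \<and>
     in_span2 e {(1,2),(1,3),(2,3)} (dform br (e 4)) \<and>
     in_span2 e {(1,2),(1,3),(1,4),(2,3),(2,4),(3,4)} (dform br (e 5)) \<and>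
     in_span2 e {(1,2),(1,3),(1,4),(1,5),(2,3),(2,4),(2,5),(3,4)} (dform br (e 6))"
proof -
  interpret nilpotent_complex_structure br J
    using assms(2-4) by (rule nilpotent_complex_structureI)
  obtain X where "adapted_frame br J X"
    using exists_adapted_frame[OF assms(1)] by blast
  then interpret adapted_frame br J X .
  obtain e where "adapted_coframe br J X e"
    using exists_adapted_coframe[OF assms(1)] by blast
  then interpret adapted_coframe br J X e .
  have "in_span2 e {(1,2)} (dform br (e 3))"
    by (rule in_span2_dform_coframe) (auto simp: less_Suc_eq numeral_eq_Suc)
  moreover have "in_span2 e {(1,2),(1,3),(2,3)} (dform br (e 4))"
    by (rule in_span2_dform_coframe) (auto simp: less_Suc_eq numeral_eq_Suc)
  moreover have "in_span2 e {(1,2),(1,3),(1,4),(2,3),(2,4),(3,4)} (dform br (e 5))"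
    by (rule in_span2_dform_coframe) (auto simp: less_Suc_eq numeral_eq_Suc)
  moreover have "in_span2 e {(1,2),(1,3),(1,4),(1,5),(2,3),(2,4),(2,5),(3,4)} (dform br (e 6))"
    by (rule in_span2_dform_coframe[OF _ _ _ br_X_outside]) auto
  ultimately show ?thesis
    unfolding Let_def using dual_basis6_coframe is_form_10_coframe dform_coframe_closed by blast
qed

end
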